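(* Let $N\ge 1$ and $-\infty<a_i\le b_i<\infty$ with $r_i=(b_i-a_i)/2>0$ for all $i$; set $m_i=(a_i+b_i)/2$, $\Theta=\prod_{i=1}^N[a_i,b_i]$, $T(y)=\sum_{i=1}^N y_i$. Let $p$ be a sampling design with inclusion probabilities $\pi_i=\mathbb P_p(i\in S)>0$ for all $i$, and suppose $\mathbb P_p(i\in S,\ j\in S)=\pi_i\pi_j$ for every pair $i\ne j$. Then \[ \inf_{\delta}\sup_{y\in\Theta}R(\delta,p;y)=\sum_{i=1}^N r_i^2\,\frac{1-\pi_i}{\pi_i}, \] where the infimum is over all unbiased estimators, and the infimum is attained by $\widehat T(y_S)=\sum_{i=1}^N m_i+\sum_{i\in S}\frac{y_i-m_i}{\pi_i}$.
   Context: A sampling design is a probability distribution $p$ on the subsets $s\subseteq\{1,\dots,N\}$; $S$ denotes the random sample drawn from $p$, $\mathbb P_p$ and $\mathbb E_p$ denote probability and expectation with respect to $p$. An estimator $\delta$ is a collection of measurable functions $\delta_s:\Theta_s\to\mathbb R$, one for each subset $s$, where $\Theta_s=\prod_{i\in s}[a_i,b_i]$; for $y\in\Theta$ write $y_s=(y_i)_{i\in s}$. The estimator is unbiased if $\mathbb E_p[\delta_S(y_S)]=T(y)$ for all $y\in\Theta$. The risk is $R(\delta,p;y)=\mathbb E_p[(\delta_S(y_S)-T(y))^2]$. *)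

theory Defs
  imports "HOL-Probability.Probability"
begin

text \<open>Population indices are {1..N}; y :: nat \<Rightarrow> real (values outside {1..N} irrelevant). An estimator is a family
  delta s, each measurable on Theta_s = prod_{i in s} [a i, b i] (as a PiM space of
  extensional functions); it is applied to y_s = restrict y s.\<close>

definition Theta :: "nat \<Rightarrow> (nat \<Rightarrow> real) \<Rightarrow> (nat \<Rightarrow> real) \<Rightarrow> (nat \<Rightarrow> real) set" where
  "Theta N a b = {y. \<forall>i\<in>{1..N}. a i \<le> y i \<and> y i \<le> b i}"

definition total :: "nat \<Rightarrow> (nat \<Rightarrow> real) \<Rightarrow> real" where
  "total N y = (\<Sum>i=1..N. y i)"

definition incl_prob :: "nat set pmf \<Rightarrow> nat \<Rightarrow> real" where
  "incl_prob p i = measure_pmf.prob p {s. i \<in> s}"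

definition is_estimator ::
  "nat \<Rightarrow> (nat \<Rightarrow> real) \<Rightarrow> (nat \<Rightarrow> real) \<Rightarrow> (nat set \<Rightarrow> (nat \<Rightarrow> real) \<Rightarrow> real) \<Rightarrow> bool" where
  "is_estimator N a b \<delta> =
     (\<forall>s. s \<subseteq> {1..N} \<longrightarrow>
        \<delta> s \<in> borel_measurable (PiM s (\<lambda>i. restrict_space borel {a i..b i})))"

definition risk ::
  "nat \<Rightarrow> nat set pmf \<Rightarrow> (nat set \<Rightarrow> (nat \<Rightarrow> real) \<Rightarrow> real) \<Rightarrow> (nat \<Rightarrow> real) \<Rightarrow> real" where
  "risk N p \<delta> y = measure_pmf.expectation p (\<lambda>s. (\<delta> s (restrict y s) - total N y)\<^sup>2)"

definition unbiased ::
  "nat \<Rightarrow> (nat \<Rightarrow> real) \<Rightarrow> (nat \<Rightarrow> real) \<Rightarrow> nat set pmf \<Rightarrow> (nat set \<Rightarrow> (nat \<Rightarrow> real) \<Rightarrow> real) \<Rightarrow> bool" where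
  "unbiased N a b p \<delta> =
     (is_estimator N a b \<delta> \<and>
      (\<forall>y\<in>Theta N a b. measure_pmf.expectation p (\<lambda>s. \<delta> s (restrict y s)) = total N y))"

definition ht_est ::
  "nat \<Rightarrow> (nat \<Rightarrow> real) \<Rightarrow> (nat \<Rightarrow> real) \<Rightarrow> nat set pmf \<Rightarrow> nat set \<Rightarrow> (nat \<Rightarrow> real) \<Rightarrow> real" where
  "ht_est N a b p s ys =
     (\<Sum>i=1..N. (a i + b i) / 2) + (\<Sum>i\<in>s. (ys i - (a i + b i) / 2) / incl_prob p i)"

end

theory Submission
  imports Defs
begin

(* Write m i = (a i + b i) / 2 and r i = (b i - a i) / 2.

   Upper bound: the error of ht_est is the sum over i of (y i - m i) (1{i in S} / pi i - 1).
   The summands are centred and, by pairwise independence of the inclusions, uncorrelated, so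
   the risk is the sum of (y i - m i)^2 (1 - pi i) / pi i, which is largest at y = b.

   Lower bound: average the risk of an unbiased estimator delta over the 2^N vertices m + r e,
   e in {-1,1}^N, of the box.  For a fixed sample s, Bessel's inequality for the orthogonal
   functions e |-> e i bounds the mean squared error over the vertices by the sum over i of
   (c s i - r i)^2, where c s i is the first-order Walsh coefficient of e |-> delta s (m + r e).
   Since delta s only reads the coordinates in s, c s i = 0 for i not in s, while unbiasedness
   makes the mean of c S i equal to r i.  A variable with mean r i that vanishes off an event
   of probability pi i has variance at least r i^2 (1 - pi i) / pi i (Cauchy-Schwarz), so some
   vertex has risk at least the sum of these bounds. *)

lemma expectation_pmf_finite_support:
  assumes "finite P" "set_pmf p \<subseteq> P"
  shows "measure_pmf.expectation p f = (\<Sum>s\<in>P. pmf p s * f s)"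
  using integral_measure_pmf[OF assms(1), of p f] assms(2) by auto

lemma prob_pmf_finite_support:
  assumes "finite P" "set_pmf p \<subseteq> P"
  shows "measure_pmf.prob p {s. Q s} = (\<Sum>s\<in>P. pmf p s * of_bool (Q s))"
  using expectation_pmf_finite_support[OF assms, of "indicator {s. Q s}"] by (simp add: indicator_def)

lemma sum_weighted_square_orthogonal:
  fixes w :: "'s \<Rightarrow> real" and X :: "'i \<Rightarrow> 's \<Rightarrow> real"
  assumes "finite I"
    and orth: "\<And>i j. i \<in> I \<Longrightarrow> j \<in> I \<Longrightarrow> i \<noteq> j \<Longrightarrow> (\<Sum>s\<in>P. w s * (X i s * X j s)) = 0"
  shows "(\<Sum>s\<in>P. w s * (\<Sum>i\<in>I. z i * X i s)\<^sup>2) = (\<Sum>i\<in>I. (z i)\<^sup>2 * (\<Sum>s\<in>P. w s * (X i s)\<^sup>2))"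
proof -
  have "(\<Sum>s\<in>P. w s * (\<Sum>i\<in>I. z i * X i s)\<^sup>2)
      = (\<Sum>i\<in>I. \<Sum>j\<in>I. z i * z j * (\<Sum>s\<in>P. w s * (X i s * X j s)))"
    by (simp add: power2_eq_square sum_product sum_distrib_left mult_ac sum.swap[of _ P])
  also have "\<dots> = (\<Sum>i\<in>I. \<Sum>j\<in>I. if j = i then (z i)\<^sup>2 * (\<Sum>s\<in>P. w s * (X i s)\<^sup>2) else 0)"
    using orth by (intro sum.cong) (auto simp: power2_eq_square)
  also have "\<dots> = (\<Sum>i\<in>I. (z i)\<^sup>2 * (\<Sum>s\<in>P. w s * (X i s)\<^sup>2))"
    using assms(1) by simp
  finally show ?thesis .
qed

lemma bessel_inequality:
  fixes D :: "'e \<Rightarrow> real" and u :: "'i \<Rightarrow> 'e \<Rightarrow> real"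
  assumes "finite I" "K > 0"
    and orth: "\<And>i j. i \<in> I \<Longrightarrow> j \<in> I \<Longrightarrow> (\<Sum>e\<in>E. u i e * u j e) = (if i = j then K else 0)"
  shows "(\<Sum>i\<in>I. (\<Sum>e\<in>E. D e * u i e)\<^sup>2) / K \<le> (\<Sum>e\<in>E. (D e)\<^sup>2)"
proof -
  define c where "c i = (\<Sum>e\<in>E. D e * u i e) / K" for i
  define proj where "proj e = (\<Sum>i\<in>I. c i * u i e)" for e
  have proj_sq: "(\<Sum>e\<in>E. (proj e)\<^sup>2) = K * (\<Sum>i\<in>I. (c i)\<^sup>2)"
    using sum_weighted_square_orthogonal[OF assms(1), where P=E and w="\<lambda>_. 1" and X=u and z=c] orth
    by (simp add: proj_def power2_eq_square sum_distrib_left mult_ac)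
  have D_u: "(\<Sum>e\<in>E. D e * u i e) = K * c i" for i
    using assms(2) by (simp add: c_def)
  have "(\<Sum>e\<in>E. D e * proj e) = (\<Sum>i\<in>I. c i * (\<Sum>e\<in>E. D e * u i e))"
    by (simp add: proj_def sum_distrib_left mult_ac sum.swap[of _ E])
  also have "\<dots> = K * (\<Sum>i\<in>I. (c i)\<^sup>2)"
    by (simp add: D_u sum_distrib_left power2_eq_square mult_ac)
  finally have D_proj: "(\<Sum>e\<in>E. D e * proj e) = K * (\<Sum>i\<in>I. (c i)\<^sup>2)" .
  have "0 \<le> (\<Sum>e\<in>E. (D e - proj e)\<^sup>2)"
    by (simp add: sum_nonneg)
  also have "\<dots> = (\<Sum>e\<in>E. (D e)\<^sup>2) - K * (\<Sum>i\<in>I. (c i)\<^sup>2)"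
    by (simp add: power2_diff sum.distrib sum_subtractf sum_distrib_left[symmetric] mult.assoc D_proj proj_sq)
  finally have "K * (\<Sum>i\<in>I. (c i)\<^sup>2) \<le> (\<Sum>e\<in>E. (D e)\<^sup>2)" by simp
  moreover have "(\<Sum>e\<in>E. D e * u i e)\<^sup>2 / K = K * (c i)\<^sup>2" for i
    using assms(2) by (simp add: D_u power2_eq_square)
  ultimately show ?thesis
    by (simp add: sum_divide_distrib sum_distrib_left)
qed

lemma weighted_variance_ge_of_vanishing_off:
  fixes w X :: "'s \<Rightarrow> real"
  assumes "\<And>s. s \<in> P \<Longrightarrow> 0 \<le> w s" "(\<Sum>s\<in>P. w s) = 1"
    and mass: "(\<Sum>s\<in>P. w s * of_bool (s \<in> A)) = q" "q > 0"
    and vanish: "\<And>s. s \<in> P \<Longrightarrow> s \<notin> A \<Longrightarrow> X s = 0"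
    and mean: "(\<Sum>s\<in>P. w s * X s) = R"
  shows "R\<^sup>2 * (1 - q) / q \<le> (\<Sum>s\<in>P. w s * (X s - R)\<^sup>2)"
proof -
  define t where "t = R / q"
  have "w s * (X s - t * of_bool (s \<in> A))\<^sup>2
      = w s * (X s)\<^sup>2 - 2 * t * (w s * X s) + t\<^sup>2 * (w s * of_bool (s \<in> A))" if "s \<in> P" for s
    using vanish[OF that] by (cases "s \<in> A") (auto simp: power2_eq_square algebra_simps)
  then have "(\<Sum>s\<in>P. w s * (X s - t * of_bool (s \<in> A))\<^sup>2)
      = (\<Sum>s\<in>P. w s * (X s)\<^sup>2) - 2 * t * R + t\<^sup>2 * q"
    using mass(1) mean by (simp add: sum.distrib sum_subtractf sum_distrib_left[symmetric])
  moreover have "0 \<le> (\<Sum>s\<in>P. w s * (X s - t * of_bool (s \<in> A))\<^sup>2)"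
    using assms(1) by (simp add: sum_nonneg)
  moreover have "2 * t * R - t\<^sup>2 * q = R\<^sup>2 / q"
    using mass(2) by (simp add: t_def field_simps power2_eq_square)
  ultimately have second_moment: "R\<^sup>2 / q \<le> (\<Sum>s\<in>P. w s * (X s)\<^sup>2)"
    by linarith
  have "w s * (X s - R)\<^sup>2 = w s * (X s)\<^sup>2 - 2 * R * (w s * X s) + R\<^sup>2 * w s" for s
    by (simp add: power2_eq_square algebra_simps)
  then have "(\<Sum>s\<in>P. w s * (X s - R)\<^sup>2) = (\<Sum>s\<in>P. w s * (X s)\<^sup>2) - R\<^sup>2"
    using assms(2) mean
    by (simp add: sum.distrib sum_subtractf sum_distrib_left[symmetric] power2_eq_square)
  moreover have "R\<^sup>2 * (1 - q) / q = R\<^sup>2 / q - R\<^sup>2"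
    using mass(2) by (simp add: field_simps)
  ultimately show ?thesis
    using second_moment by simp
qed

lemma ht_est_measurable:
  "ht_est N a b p s \<in> borel_measurable (PiM s (\<lambda>i. restrict_space borel {a i..b i}))"
proof -
  have "(\<lambda>x. x i) \<in> borel_measurable (PiM s (\<lambda>i. restrict_space borel {a i..b i}))" if "i \<in> s" for i
    using measurable_compose[OF measurable_component_singleton[OF that]
        measurable_restrict_space1[OF measurable_id]] .
  then show ?thesis
    unfolding ht_est_def by (intro borel_measurable_add borel_measurable_sum borel_measurable_divide
        borel_measurable_diff) auto
qed

lemma ht_est_error:
  assumes "s \<subseteq> {1..N}"
  shows "ht_est N a b p s (restrict y s) - total N y
    = (\<Sum>i=1..N. (y i - (a i + b i) / 2) * (of_bool (i \<in> s) / incl_prob p i - 1))"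
proof -
  have "(\<Sum>i\<in>s. (restrict y s i - (a i + b i) / 2) / incl_prob p i)
      = (\<Sum>i=1..N. of_bool (i \<in> s) * ((y i - (a i + b i) / 2) / incl_prob p i))"
    using assms by (simp only: sum_of_bool_mult_eq finite_atLeastAtMost Collect_mem_eq Int_absorb1) simp
  moreover have "m + d * ((z - m) / q) - z = (z - m) * (d / q - 1)" for m z d q :: real
    by (simp add: field_simps)
  ultimately show ?thesis
    unfolding ht_est_def total_def by (simp add: sum.distrib[symmetric] sum_subtractf[symmetric])
qed

lemma sum_pmf_incl_deviation:
  assumes "finite P" "set_pmf p \<subseteq> P" "incl_prob p i > 0"
  shows "(\<Sum>s\<in>P. pmf p s * (of_bool (i \<in> s) / incl_prob p i - 1)) = 0"
proof -
  have "(\<Sum>s\<in>P. pmf p s * (of_bool (i \<in> s) / incl_prob p i - 1))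
      = (\<Sum>s\<in>P. pmf p s * of_bool (i \<in> s)) / incl_prob p i - (\<Sum>s\<in>P. pmf p s)"
    by (simp only: right_diff_distrib mult.right_neutral times_divide_eq_right sum_subtractf
        sum_divide_distrib)
  also have "\<dots> = 0"
    using assms prob_pmf_finite_support[OF assms(1,2), of "\<lambda>s. i \<in> s"] sum_pmf_eq_1[OF assms(1,2)]
    by (simp only: incl_prob_def) simp
  finally show ?thesis .
qed

lemma sum_pmf_incl_deviation_mult:
  assumes "finite P" "set_pmf p \<subseteq> P" "incl_prob p i > 0" "incl_prob p j > 0"
  shows "(\<Sum>s\<in>P. pmf p s * ((of_bool (i \<in> s) / incl_prob p i - 1) * (of_bool (j \<in> s) / incl_prob p j - 1)))
    = measure_pmf.prob p {s. i \<in> s \<and> j \<in> s} / (incl_prob p i * incl_prob p j) - 1"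
proof -
  define \<pi>\<^sub>i \<pi>\<^sub>j where "\<pi>\<^sub>i = incl_prob p i" and "\<pi>\<^sub>j = incl_prob p j"
  have "pmf p s * ((of_bool (i \<in> s) / \<pi>\<^sub>i - 1) * (of_bool (j \<in> s) / \<pi>\<^sub>j - 1))
      = pmf p s * of_bool (i \<in> s \<and> j \<in> s) / (\<pi>\<^sub>i * \<pi>\<^sub>j) - pmf p s * of_bool (i \<in> s) / \<pi>\<^sub>i
        - pmf p s * of_bool (j \<in> s) / \<pi>\<^sub>j + pmf p s" for s
    using assms(3,4) by (simp add: \<pi>\<^sub>i_def \<pi>\<^sub>j_def field_simps)
  then have "(\<Sum>s\<in>P. pmf p s * ((of_bool (i \<in> s) / \<pi>\<^sub>i - 1) * (of_bool (j \<in> s) / \<pi>\<^sub>j - 1)))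
      = (\<Sum>s\<in>P. pmf p s * of_bool (i \<in> s \<and> j \<in> s)) / (\<pi>\<^sub>i * \<pi>\<^sub>j)
        - (\<Sum>s\<in>P. pmf p s * of_bool (i \<in> s)) / \<pi>\<^sub>i
        - (\<Sum>s\<in>P. pmf p s * of_bool (j \<in> s)) / \<pi>\<^sub>j + (\<Sum>s\<in>P. pmf p s)"
    by (simp only: sum.distrib sum_subtractf sum_divide_distrib)
  also have "\<dots> = measure_pmf.prob p {s. i \<in> s \<and> j \<in> s} / (\<pi>\<^sub>i * \<pi>\<^sub>j) - 1"
    using assms(3,4) sum_pmf_eq_1[OF assms(1,2)]
      prob_pmf_finite_support[OF assms(1,2), of "\<lambda>s. i \<in> s \<and> j \<in> s"]
      prob_pmf_finite_support[OF assms(1,2), of "\<lambda>s. i \<in> s"]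
      prob_pmf_finite_support[OF assms(1,2), of "\<lambda>s. j \<in> s"]
    by (simp only: \<pi>\<^sub>i_def \<pi>\<^sub>j_def incl_prob_def) simp
  finally show ?thesis
    by (simp only: \<pi>\<^sub>i_def \<pi>\<^sub>j_def)
qed

lemma ht_est_unbiased:
  assumes sp: "set_pmf p \<subseteq> Pow {1..N}" and pos: "\<forall>i\<in>{1..N}. incl_prob p i > 0"
  shows "unbiased N a b p (ht_est N a b p)"
proof -
  have "measure_pmf.expectation p (\<lambda>s. ht_est N a b p s (restrict y s)) = total N y" for y
  proof -
    have "measure_pmf.expectation p (\<lambda>s. ht_est N a b p s (restrict y s)) - total N y
        = (\<Sum>s\<in>Pow {1..N}. pmf p s * (ht_est N a b p s (restrict y s) - total N y))"
      using sum_pmf_eq_1[OF _ sp]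
      by (simp add: expectation_pmf_finite_support[OF _ sp] right_diff_distrib sum_subtractf
          sum_distrib_right[symmetric])
    also have "\<dots> = (\<Sum>s\<in>Pow {1..N}. pmf p s *
        (\<Sum>i=1..N. (y i - (a i + b i) / 2) * (of_bool (i \<in> s) / incl_prob p i - 1)))"
      by (intro sum.cong) (simp_all add: ht_est_error)
    also have "\<dots> = (\<Sum>i=1..N. (y i - (a i + b i) / 2) *
        (\<Sum>s\<in>Pow {1..N}. pmf p s * (of_bool (i \<in> s) / incl_prob p i - 1)))"
      by (simp add: sum_distrib_left mult.left_commute) (rule sum.swap)
    also have "\<dots> = 0"
      using sum_pmf_incl_deviation[OF _ sp] pos by simp
    finally show ?thesis by simp
  qed
  then show ?thesis
    unfolding unbiased_def is_estimator_def using ht_est_measurable by blast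
qed

lemma ht_est_risk:
  assumes sp: "set_pmf p \<subseteq> Pow {1..N}" and pos: "\<forall>i\<in>{1..N}. incl_prob p i > 0"
    and indep: "\<forall>i\<in>{1..N}. \<forall>j\<in>{1..N}. i \<noteq> j \<longrightarrow>
      measure_pmf.prob p {s. i \<in> s \<and> j \<in> s} = incl_prob p i * incl_prob p j"
  shows "risk N p (ht_est N a b p) y
    = (\<Sum>i=1..N. (y i - (a i + b i) / 2)\<^sup>2 * (1 - incl_prob p i) / incl_prob p i)"
proof -
  let ?X = "\<lambda>i s. of_bool (i \<in> s) / incl_prob p i - 1"
  have moment: "(\<Sum>s\<in>Pow {1..N}. pmf p s * (?X i s * ?X j s))
      = (if i = j then (1 - incl_prob p i) / incl_prob p i else 0)"
    if "i \<in> {1..N}" "j \<in> {1..N}" for i j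
  proof -
    have pos_ij: "incl_prob p i > 0" "incl_prob p j > 0"
      using pos that by auto
    have "(\<Sum>s\<in>Pow {1..N}. pmf p s * (?X i s * ?X j s))
        = measure_pmf.prob p {s. i \<in> s \<and> j \<in> s} / (incl_prob p i * incl_prob p j) - 1"
      by (rule sum_pmf_incl_deviation_mult[OF _ sp pos_ij]) simp
    also have "\<dots> = (if i = j then (1 - incl_prob p i) / incl_prob p i else 0)"
      using indep that pos_ij by (cases "i = j") (simp_all add: incl_prob_def[symmetric] field_simps)
    finally show ?thesis .
  qed
  have "risk N p (ht_est N a b p) y
      = (\<Sum>s\<in>Pow {1..N}. pmf p s * (ht_est N a b p s (restrict y s) - total N y)\<^sup>2)"
    unfolding risk_def by (simp add: expectation_pmf_finite_support[OF _ sp])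
  also have "\<dots> = (\<Sum>s\<in>Pow {1..N}. pmf p s * (\<Sum>i=1..N. (y i - (a i + b i) / 2) * ?X i s)\<^sup>2)"
    by (intro sum.cong) (simp_all add: ht_est_error)
  also have "\<dots> = (\<Sum>i=1..N. (y i - (a i + b i) / 2)\<^sup>2 * (\<Sum>s\<in>Pow {1..N}. pmf p s * (?X i s)\<^sup>2))"
  proof (rule sum_weighted_square_orthogonal)
    fix i j assume ij: "i \<in> {1..N}" "j \<in> {1..N}" and "i \<noteq> j"
    then show "(\<Sum>s\<in>Pow {1..N}. pmf p s * (?X i s * ?X j s)) = 0"
      using moment[OF ij] by simp
  qed simp
  also have "\<dots> = (\<Sum>i=1..N. (y i - (a i + b i) / 2)\<^sup>2 * (1 - incl_prob p i) / incl_prob p i)"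
    using moment by (intro sum.cong) (simp_all add: power2_eq_square)
  finally show ?thesis .
qed

lemma ht_est_max_risk:
  assumes ab: "\<forall>i\<in>{1..N}. a i \<le> b i"
    and sp: "set_pmf p \<subseteq> Pow {1..N}" and pos: "\<forall>i\<in>{1..N}. incl_prob p i > 0"
    and indep: "\<forall>i\<in>{1..N}. \<forall>j\<in>{1..N}. i \<noteq> j \<longrightarrow>
      measure_pmf.prob p {s. i \<in> s \<and> j \<in> s} = incl_prob p i * incl_prob p j"
  shows "(SUP y\<in>Theta N a b. ereal (risk N p (ht_est N a b p) y))
    = ereal (\<Sum>i=1..N. ((b i - a i) / 2)\<^sup>2 * (1 - incl_prob p i) / incl_prob p i)"
proof (rule antisym)
  have "risk N p (ht_est N a b p) y
      \<le> (\<Sum>i=1..N. ((b i - a i) / 2)\<^sup>2 * (1 - incl_prob p i) / incl_prob p i)"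
    if "y \<in> Theta N a b" for y
    unfolding ht_est_risk[OF sp pos indep]
  proof (rule sum_mono)
    fix i assume i: "i \<in> {1..N}"
    have "a i \<le> y i" "y i \<le> b i"
      using that i unfolding Theta_def by auto
    then have "\<bar>y i - (a i + b i) / 2\<bar> \<le> (b i - a i) / 2"
      by (intro abs_leI) (simp_all add: field_simps)
    then have "(y i - (a i + b i) / 2)\<^sup>2 \<le> ((b i - a i) / 2)\<^sup>2"
      using ab i by (subst power2_le_iff_abs_le) auto
    moreover have "0 \<le> (1 - incl_prob p i) / incl_prob p i"
      using pos i by (simp add: incl_prob_def)
    ultimately show "(y i - (a i + b i) / 2)\<^sup>2 * (1 - incl_prob p i) / incl_prob p i
        \<le> ((b i - a i) / 2)\<^sup>2 * (1 - incl_prob p i) / incl_prob p i"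
      using mult_right_mono by fastforce
  qed
  then show "(SUP y\<in>Theta N a b. ereal (risk N p (ht_est N a b p) y))
      \<le> ereal (\<Sum>i=1..N. ((b i - a i) / 2)\<^sup>2 * (1 - incl_prob p i) / incl_prob p i)"
    by (intro SUP_least) simp
  have "b \<in> Theta N a b"
    using ab by (simp add: Theta_def)
  moreover have "risk N p (ht_est N a b p) b
      = (\<Sum>i=1..N. ((b i - a i) / 2)\<^sup>2 * (1 - incl_prob p i) / incl_prob p i)"
    unfolding ht_est_risk[OF sp pos indep] by (intro sum.cong) (simp_all add: field_simps)
  ultimately show "ereal (\<Sum>i=1..N. ((b i - a i) / 2)\<^sup>2 * (1 - incl_prob p i) / incl_prob p i)
      \<le> (SUP y\<in>Theta N a b. ereal (risk N p (ht_est N a b p) y))"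
    by (metis SUP_upper)
qed

definition sign_vectors :: "'i set \<Rightarrow> ('i \<Rightarrow> real) set" where
  "sign_vectors I = PiE I (\<lambda>_. {-1, 1})"

lemma sign_vectors_coord_square:
  "e \<in> sign_vectors I \<Longrightarrow> i \<in> I \<Longrightarrow> e i * e i = 1"
  by (auto simp: sign_vectors_def PiE_iff)

lemma finite_sign_vectors: "finite I \<Longrightarrow> finite (sign_vectors I)"
  by (simp add: sign_vectors_def finite_PiE)

lemma card_sign_vectors_pos: "finite I \<Longrightarrow> card (sign_vectors I) > 0"
proof -
  assume "finite I"
  moreover have "restrict (\<lambda>_. 1) I \<in> sign_vectors I"
    by (auto simp: sign_vectors_def)
  ultimately show ?thesis
    by (auto simp: card_gt_0_iff finite_sign_vectors)
qed

lemma sum_sign_vectors_flip_invariant: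
  assumes "i \<in> I" and "\<And>e. e \<in> sign_vectors I \<Longrightarrow> F (e(i := - e i)) = F e"
  shows "(\<Sum>e\<in>sign_vectors I. F e * e i) = 0"
proof -
  have "(\<Sum>e\<in>sign_vectors I. F e * e i)
      = (\<Sum>e\<in>sign_vectors I. F (e(i := - e i)) * (e(i := - e i)) i)"
    by (rule sum.reindex_bij_witness[where i="\<lambda>e. e(i := - e i)" and j="\<lambda>e. e(i := - e i)"])
      (use assms(1) in \<open>auto simp: sign_vectors_def PiE_iff extensional_def\<close>)
  also have "\<dots> = - (\<Sum>e\<in>sign_vectors I. F e * e i)"
    using assms(2) by (simp add: sum_negf[symmetric])
  finally show ?thesis by simp
qed

lemma sum_sign_vectors_coord: "i \<in> I \<Longrightarrow> (\<Sum>e\<in>sign_vectors I. e i) = 0"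
  using sum_sign_vectors_flip_invariant[of i I "\<lambda>_. 1"] by simp

lemma sum_sign_vectors_coord_mult:
  assumes "i \<in> I" "j \<in> I"
  shows "(\<Sum>e\<in>sign_vectors I. e i * e j) = (if i = j then card (sign_vectors I) else 0)"
proof (cases "i = j")
  case True
  then show ?thesis
    using sign_vectors_coord_square[OF _ assms(1)] by simp
next
  case False
  then have "(\<Sum>e\<in>sign_vectors I. e j * e i) = 0"
    by (intro sum_sign_vectors_flip_invariant[OF assms(1)]) simp
  then show ?thesis
    using False by (simp add: mult.commute)
qed

lemma sign_vectors_bessel:
  fixes h :: "('i \<Rightarrow> real) \<Rightarrow> real"
  assumes "finite I"
  shows "(\<Sum>i\<in>I. (\<Sum>e\<in>sign_vectors I. h e * e i)\<^sup>2) / card (sign_vectors I)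
    \<le> (\<Sum>e\<in>sign_vectors I. (h e)\<^sup>2)"
  using assms card_sign_vectors_pos[OF assms]
  by (intro bessel_inequality) (simp_all add: sum_sign_vectors_coord_mult)

definition box_vertex :: "(nat \<Rightarrow> real) \<Rightarrow> (nat \<Rightarrow> real) \<Rightarrow> (nat \<Rightarrow> real) \<Rightarrow> nat \<Rightarrow> real" where
  "box_vertex a b e i = (a i + b i) / 2 + (b i - a i) / 2 * e i"

lemma box_vertex_in_Theta:
  assumes "\<forall>i\<in>{1..N}. a i \<le> b i" "e \<in> sign_vectors {1..N}"
  shows "box_vertex a b e \<in> Theta N a b"
  unfolding Theta_def
proof (intro CollectI ballI)
  fix i assume "i \<in> {1..N}"
  with assms have "a i \<le> b i" "e i = -1 \<or> e i = 1"
    by (auto simp: sign_vectors_def PiE_iff)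
  then show "a i \<le> box_vertex a b e i \<and> box_vertex a b e i \<le> b i"
    by (auto simp: box_vertex_def field_simps)
qed

lemma sum_sign_vectors_total_box_vertex:
  assumes "i \<in> {1..N}"
  shows "(\<Sum>e\<in>sign_vectors {1..N}. total N (box_vertex a b e) * e i)
    = card (sign_vectors {1..N}) * ((b i - a i) / 2)"
proof -
  define E where "E = sign_vectors {1..N}"
  define m where "m = (\<Sum>j=1..N. (a j + b j) / 2)"
  have "total N (box_vertex a b e) = m + (\<Sum>j=1..N. (b j - a j) / 2 * e j)" for e
    by (simp add: m_def total_def box_vertex_def sum.distrib)
  then have "(\<Sum>e\<in>E. total N (box_vertex a b e) * e i)
      = (\<Sum>e\<in>E. m * e i + (\<Sum>j=1..N. (b j - a j) / 2 * (e j * e i)))"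
    by (simp add: distrib_right sum_distrib_right mult.assoc)
  also have "\<dots> = m * (\<Sum>e\<in>E. e i) + (\<Sum>j=1..N. (b j - a j) / 2 * (\<Sum>e\<in>E. e j * e i))"
    by (simp add: sum.distrib sum_distrib_left) (rule sum.swap)
  also have "\<dots> = (\<Sum>j=1..N. (b j - a j) / 2 * (\<Sum>e\<in>E. e j * e i))"
    using sum_sign_vectors_coord[OF assms] unfolding E_def by simp
  also have "\<dots> = (\<Sum>j=1..N. if j = i then card E * ((b j - a j) / 2) else 0)"
    using sum_sign_vectors_coord_mult[OF _ assms] unfolding E_def[symmetric]
    by (intro sum.cong) simp_all
  also have "\<dots> = card E * ((b i - a i) / 2)"
    using assms by simp
  finally show ?thesis
    unfolding E_def .
qed

definition vertex_coeff ::
  "nat \<Rightarrow> (nat \<Rightarrow> real) \<Rightarrow> (nat \<Rightarrow> real) \<Rightarrow> (nat set \<Rightarrow> (nat \<Rightarrow> real) \<Rightarrow> real) \<Rightarrow> nat set \<Rightarrow> nat \<Rightarrow> real" where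
  "vertex_coeff N a b \<delta> s i =
     (\<Sum>e\<in>sign_vectors {1..N}. \<delta> s (restrict (box_vertex a b e) s) * e i) / card (sign_vectors {1..N})"

lemma vertex_coeff_eq_0:
  assumes "i \<in> {1..N}" "i \<notin> s"
  shows "vertex_coeff N a b \<delta> s i = 0"
proof -
  have "restrict (box_vertex a b (e(i := - e i))) s = restrict (box_vertex a b e) s" for e
    using assms(2) by (auto simp: restrict_def box_vertex_def)
  then have "(\<Sum>e\<in>sign_vectors {1..N}. \<delta> s (restrict (box_vertex a b e) s) * e i) = 0"
    by (intro sum_sign_vectors_flip_invariant[OF assms(1)]) simp
  then show ?thesis
    unfolding vertex_coeff_def by simp
qed

lemma sum_pmf_vertex_coeff:
  assumes ab: "\<forall>i\<in>{1..N}. a i \<le> b i" and sp: "set_pmf p \<subseteq> Pow {1..N}"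
    and unb: "unbiased N a b p \<delta>" and i: "i \<in> {1..N}"
  shows "(\<Sum>s\<in>Pow {1..N}. pmf p s * vertex_coeff N a b \<delta> s i) = (b i - a i) / 2"
proof -
  define E where "E = sign_vectors {1..N}"
  have unbiased_vertex:
    "(\<Sum>s\<in>Pow {1..N}. pmf p s * \<delta> s (restrict (box_vertex a b e) s)) = total N (box_vertex a b e)"
    if "e \<in> E" for e
    using unb box_vertex_in_Theta[OF ab that[unfolded E_def]]
    by (simp add: unbiased_def expectation_pmf_finite_support[OF _ sp])
  have "(\<Sum>s\<in>Pow {1..N}. pmf p s * vertex_coeff N a b \<delta> s i)
      = (\<Sum>s\<in>Pow {1..N}. pmf p s * (\<Sum>e\<in>E. \<delta> s (restrict (box_vertex a b e) s) * e i)) / card E"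
    unfolding vertex_coeff_def E_def by (simp only: times_divide_eq_right sum_divide_distrib[symmetric])
  also have "(\<Sum>s\<in>Pow {1..N}. pmf p s * (\<Sum>e\<in>E. \<delta> s (restrict (box_vertex a b e) s) * e i))
      = (\<Sum>e\<in>E. total N (box_vertex a b e) * e i)"
    using unbiased_vertex
    by (simp add: sum_distrib_left sum_distrib_right[symmetric] mult.assoc[symmetric] sum.swap[of _ E])
  also have "\<dots> = card E * ((b i - a i) / 2)"
    using sum_sign_vectors_total_box_vertex[OF i] by (simp add: E_def)
  finally show ?thesis
    using card_sign_vectors_pos[of "{1..N}"] by (simp add: E_def)
qed

lemma sum_vertex_error_square_ge:
  "card (sign_vectors {1..N}) * (\<Sum>i=1..N. (vertex_coeff N a b \<delta> s i - (b i - a i) / 2)\<^sup>2)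
    \<le> (\<Sum>e\<in>sign_vectors {1..N}. (\<delta> s (restrict (box_vertex a b e) s) - total N (box_vertex a b e))\<^sup>2)"
proof -
  define E where "E = sign_vectors {1..N}"
  define K where "K = real (card E)"
  define D where "D e = \<delta> s (restrict (box_vertex a b e) s) - total N (box_vertex a b e)" for e
  have K_pos: "K > 0"
    using card_sign_vectors_pos[of "{1..N}"] by (simp add: K_def E_def)
  have "(\<Sum>e\<in>E. D e * e i) = K * (vertex_coeff N a b \<delta> s i - (b i - a i) / 2)" if "i \<in> {1..N}" for i
    using sum_sign_vectors_total_box_vertex[OF that] K_pos
    unfolding D_def vertex_coeff_def E_def[symmetric] K_def[symmetric]
    by (simp add: left_diff_distrib sum_subtractf right_diff_distrib)
  then have "(\<Sum>i=1..N. (\<Sum>e\<in>E. D e * e i)\<^sup>2) / K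
      = K * (\<Sum>i=1..N. (vertex_coeff N a b \<delta> s i - (b i - a i) / 2)\<^sup>2)"
    using K_pos by (simp add: sum_divide_distrib sum_distrib_left power2_eq_square mult_ac
        cong: sum.cong_simp)
  with sign_vectors_bessel[of "{1..N}" D] show ?thesis
    by (simp add: D_def E_def K_def)
qed

lemma unbiased_sum_risk_box_vertices_ge:
  assumes ab: "\<forall>i\<in>{1..N}. a i \<le> b i"
    and sp: "set_pmf p \<subseteq> Pow {1..N}" and pos: "\<forall>i\<in>{1..N}. incl_prob p i > 0"
    and unb: "unbiased N a b p \<delta>"
  shows "card (sign_vectors {1..N}) * (\<Sum>i=1..N. ((b i - a i) / 2)\<^sup>2 * (1 - incl_prob p i) / incl_prob p i)
    \<le> (\<Sum>e\<in>sign_vectors {1..N}. risk N p \<delta> (box_vertex a b e))"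
proof -
  define E where "E = sign_vectors {1..N}"
  define K where "K = real (card E)"
  define c where "c = vertex_coeff N a b \<delta>"
  define r where "r i = (b i - a i) / 2" for i
  have "(r i)\<^sup>2 * (1 - incl_prob p i) / incl_prob p i \<le> (\<Sum>s\<in>Pow {1..N}. pmf p s * (c s i - r i)\<^sup>2)"
    if i: "i \<in> {1..N}" for i
  proof (rule weighted_variance_ge_of_vanishing_off[where A = "{s. i \<in> s}"])
    show "(\<Sum>s\<in>Pow {1..N}. pmf p s) = 1"
      using sum_pmf_eq_1[OF _ sp] by simp
    show "(\<Sum>s\<in>Pow {1..N}. pmf p s * of_bool (s \<in> {s. i \<in> s})) = incl_prob p i"
      using prob_pmf_finite_support[OF _ sp, of "\<lambda>s. i \<in> s"] by (simp add: incl_prob_def)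
    show "(\<Sum>s\<in>Pow {1..N}. pmf p s * c s i) = r i"
      unfolding c_def r_def by (rule sum_pmf_vertex_coeff[OF ab sp unb i])
  qed (use pos i in \<open>auto simp: c_def vertex_coeff_eq_0\<close>)
  then have "K * (\<Sum>i=1..N. (r i)\<^sup>2 * (1 - incl_prob p i) / incl_prob p i)
      \<le> K * (\<Sum>i=1..N. \<Sum>s\<in>Pow {1..N}. pmf p s * (c s i - r i)\<^sup>2)"
    by (intro mult_left_mono sum_mono) (simp_all add: K_def)
  also have "\<dots> = (\<Sum>s\<in>Pow {1..N}. pmf p s * (K * (\<Sum>i=1..N. (c s i - r i)\<^sup>2)))"
    by (simp add: sum_distrib_left mult.left_commute) (rule sum.swap)
  also have "\<dots> \<le> (\<Sum>s\<in>Pow {1..N}. pmf p s *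
      (\<Sum>e\<in>E. (\<delta> s (restrict (box_vertex a b e) s) - total N (box_vertex a b e))\<^sup>2))"
    using sum_vertex_error_square_ge[of N a b \<delta>]
    by (intro sum_mono mult_left_mono) (simp_all add: K_def E_def c_def r_def)
  also have "\<dots> = (\<Sum>e\<in>E. risk N p \<delta> (box_vertex a b e))"
    unfolding risk_def
    by (simp add: expectation_pmf_finite_support[OF _ sp] sum_distrib_left) (rule sum.swap)
  finally show ?thesis
    by (simp add: K_def E_def r_def)
qed

lemma unbiased_max_risk_ge:
  assumes ab: "\<forall>i\<in>{1..N}. a i \<le> b i"
    and sp: "set_pmf p \<subseteq> Pow {1..N}" and pos: "\<forall>i\<in>{1..N}. incl_prob p i > 0"
    and unb: "unbiased N a b p \<delta>"
  shows "ereal (\<Sum>i=1..N. ((b i - a i) / 2)\<^sup>2 * (1 - incl_prob p i) / incl_prob p i)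
    \<le> (SUP y\<in>Theta N a b. ereal (risk N p \<delta> y))"
proof -
  let ?V = "\<Sum>i=1..N. ((b i - a i) / 2)\<^sup>2 * (1 - incl_prob p i) / incl_prob p i"
  have "\<exists>e\<in>sign_vectors {1..N}. ?V \<le> risk N p \<delta> (box_vertex a b e)"
  proof (rule ccontr)
    assume "\<not> ?thesis"
    then have "(\<Sum>e\<in>sign_vectors {1..N}. risk N p \<delta> (box_vertex a b e)) < card (sign_vectors {1..N}) * ?V"
      using card_sign_vectors_pos[of "{1..N}"] by (intro sum_bounded_above_strict) auto
    with unbiased_sum_risk_box_vertices_ge[OF ab sp pos unb] show False
      by simp
  qed
  then obtain e where "e \<in> sign_vectors {1..N}" "?V \<le> risk N p \<delta> (box_vertex a b e)"
    by blast
  then show ?thesis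
    by (intro SUP_upper2[OF box_vertex_in_Theta[OF ab]]) simp_all
qed

theorem proposition3:
  fixes N :: nat and a b :: "nat \<Rightarrow> real" and p :: "nat set pmf"
  assumes "N \<ge> 1"
    and "\<forall>i\<in>{1..N}. a i \<le> b i \<and> (b i - a i) / 2 > 0"
    and "set_pmf p \<subseteq> Pow {1..N}"
    and "\<forall>i\<in>{1..N}. incl_prob p i > 0"
    and "\<forall>i\<in>{1..N}. \<forall>j\<in>{1..N}. i \<noteq> j \<longrightarrow>
           measure_pmf.prob p {s. i \<in> s \<and> j \<in> s} = incl_prob p i * incl_prob p j"
  shows "(INF \<delta>\<in>{\<delta>. unbiased N a b p \<delta>}. SUP y\<in>Theta N a b. ereal (risk N p \<delta> y))
           = ereal (\<Sum>i=1..N. ((b i - a i) / 2)\<^sup>2 * (1 - incl_prob p i) / incl_prob p i)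
       \<and> unbiased N a b p (ht_est N a b p)
       \<and> (SUP y\<in>Theta N a b. ereal (risk N p (ht_est N a b p) y))
           = ereal (\<Sum>i=1..N. ((b i - a i) / 2)\<^sup>2 * (1 - incl_prob p i) / incl_prob p i)"
proof -
  have ab: "\<forall>i\<in>{1..N}. a i \<le> b i"
    using assms(2) by blast
  note sp = assms(3) and pos = assms(4) and indep = assms(5)
  have ht_unbiased: "unbiased N a b p (ht_est N a b p)"
    by (rule ht_est_unbiased[OF sp pos])
  note ht_max_risk = ht_est_max_risk[OF ab sp pos indep]
  have "(INF \<delta>\<in>{\<delta>. unbiased N a b p \<delta>}. SUP y\<in>Theta N a b. ereal (risk N p \<delta> y))
      = ereal (\<Sum>i=1..N. ((b i - a i) / 2)\<^sup>2 * (1 - incl_prob p i) / incl_prob p i)"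
  proof (rule antisym)
    show "(INF \<delta>\<in>{\<delta>. unbiased N a b p \<delta>}. SUP y\<in>Theta N a b. ereal (risk N p \<delta> y))
        \<le> ereal (\<Sum>i=1..N. ((b i - a i) / 2)\<^sup>2 * (1 - incl_prob p i) / incl_prob p i)"
      using ht_unbiased ht_max_risk by (intro INF_lower2[of "ht_est N a b p"]) simp_all
    show "ereal (\<Sum>i=1..N. ((b i - a i) / 2)\<^sup>2 * (1 - incl_prob p i) / incl_prob p i)
        \<le> (INF \<delta>\<in>{\<delta>. unbiased N a b p \<delta>}. SUP y\<in>Theta N a b. ereal (risk N p \<delta> y))"
      using unbiased_max_risk_ge[OF ab sp pos] by (intro INF_greatest) simp
  qed
  with ht_unbiased ht_max_risk show ?thesis
    by blast
qed

end
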